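(* Let $A$ be a complex $2\times 2$ matrix with $\det(A)=1$, and let $A=PU$ be its polar decomposition, where $P$ is a positive definite Hermitian matrix and $U$ is unitary. Then $A+(A^{\mathbf c})^*$ is a nonzero real multiple of $U$; that is, $\varkappa^\circ([A]_{\mathbb{C}^*})=[A+(A^{\mathbf c})^*]_{\mathbb{R}^*}$, and this class lies in $PSU(2)$.
   Context: For a complex $2\times 2$ matrix $B=\begin{pmatrix}a&b\\ c&d\end{pmatrix}$ write $B^{\mathbf c}=\begin{pmatrix}d&-b\\ -c&a\end{pmatrix}$ and let $B^*$ denote the conjugate transpose. $\mathbb{C}P^3$ is the projectivization of the space of complex $2\times 2$ matrices; $[B]_{\mathbb{C}^*}$ denotes the class of a nonzero matrix up to nonzero complex scalars, and $[B]_{\mathbb{R}^*}$ the class up to nonzero real scalars. $PSL_2(\mathbb{C})\subset\mathbb{C}P^3$ is the set of classes with nonzero determinant, and $PSU(2)=\{[U]_{\mathbb{C}^*}: U\in SU(2)\}\subset PSL_2(\mathbb{C})$. The spherical coamoeba map $\varkappa^\circ\colon PSL_2(\mathbb{C})\to PSU(2)$ sends $[A]_{\mathbb{C}^*}$, with the representative $A$ chosen so that $\det(A)=1$, to the class of the unitary factor $U$ in the polar decomposition $A=PU$. *)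

theory Defs
  imports "HOL-Analysis.Analysis"
begin

definition mat2 :: "complex \<Rightarrow> complex \<Rightarrow> complex \<Rightarrow> complex \<Rightarrow> complex^2^2" where
  "mat2 a b c d = (\<chi> i j. if i = 1 then (if j = 1 then a else b) else (if j = 1 then c else d))"

definition cmat :: "complex^2^2 \<Rightarrow> complex^2^2" where
  "cmat B = mat2 (B$2$2) (- (B$1$2)) (- (B$2$1)) (B$1$1)"

definition cadj :: "complex^'n^'m \<Rightarrow> complex^'m^'n" where
  "cadj B = (\<chi> i j. cnj (B$j$i))"

definition unitary :: "complex^'n^'n \<Rightarrow> bool" where
  "unitary U \<longleftrightarrow> cadj U ** U = mat 1"

definition hermitian :: "complex^'n^'n \<Rightarrow> bool" where
  "hermitian P \<longleftrightarrow> cadj P = P"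

definition pos_def_hermitian :: "complex^'n^'n \<Rightarrow> bool" where
  "pos_def_hermitian P \<longleftrightarrow> hermitian P \<and>
     (\<forall>x::complex^'n. x \<noteq> 0 \<longrightarrow> 0 < Re (\<Sum>i\<in>UNIV. cnj (x$i) * (P *v x)$i))"

definition SU2 :: "(complex^2^2) set" where
  "SU2 = {U. unitary U \<and> det U = 1}"

definition cscale :: "complex \<Rightarrow> complex^'n^'m \<Rightarrow> complex^'n^'m" where
  "cscale c B = (\<chi> i j. c * B$i$j)"

end

theory Submission
  imports Defs
begin

text \<open>
  For 2x2 matrices \<open>B\<^sup>c\<close> is the adjugate, so \<open>B B\<^sup>c = det B \<cdot> I\<close>,
  \<open>B + B\<^sup>c = tr B \<cdot> I\<close> and \<open>(B C)\<^sup>c = C\<^sup>c B\<^sup>c\<close>. Since \<open>det P\<close> is a positive real and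
  \<open>|det U| = 1\<close>, the condition \<open>det A = 1\<close> forces \<open>det P = det U = 1\<close>; then
  \<open>U\<^sup>c = U\<^sup>*\<close> and, as \<open>P\<close> is Hermitian, \<open>((P U)\<^sup>c)\<^sup>* = P\<^sup>c U\<close>. Hence
  \<open>A + (A\<^sup>c)\<^sup>* = (P + P\<^sup>c) U = tr P \<cdot> U\<close>, and \<open>tr P\<close> is a positive real.
\<close>

lemma matrix_add_rdistrib: "(A + B) ** C = A ** C + B ** C"
  by (simp add: matrix_matrix_mult_def vec_eq_iff distrib_right sum.distrib)

lemma cscale_1 [simp]: "cscale 1 A = A"
  by (simp add: cscale_def vec_eq_iff)

lemma cscale_mat1_mult: "cscale c (mat 1) ** B = cscale c B"
  by (simp add: cscale_def matrix_matrix_mult_def mat_def vec_eq_iff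
      if_distrib if_distribR sum.delta' cong: if_cong)

lemma cadj_cadj [simp]: "cadj (cadj A) = A"
  by (simp add: cadj_def vec_eq_iff)

lemma cadj_matrix_mult: "cadj (A ** B) = cadj B ** cadj A"
  by (simp add: cadj_def matrix_matrix_mult_def vec_eq_iff mult.commute)

lemma det_cadj: "det (cadj A) = cnj (det A)"
proof -
  have "cadj A = transpose (\<chi> i j. cnj (A$i$j))"
    by (simp add: cadj_def transpose_def)
  then have "det (cadj A) = det (\<chi> i j. cnj (A$i$j))"
    by (simp only: det_transpose)
  then show ?thesis
    by (simp add: det_def)
qed

lemma unitary_cmod_det:
  assumes "unitary U"
  shows "cmod (det U) = 1"
proof -
  have "cnj (det U) * det U = 1"
    using assms by (metis unitary_def det_I det_cadj det_mul)
  then have "cmod (det U) ^ 2 = 1"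
    by (metis complex_norm_square mult.commute of_real_eq_1_iff)
  then show ?thesis
    using norm_ge_zero[of "det U"] by (auto simp: power2_eq_1_iff)
qed

lemma hermitian_diag_real:
  assumes "hermitian P"
  shows "P$i$i \<in> \<real>"
proof -
  have "cnj (P$i$i) = P$i$i"
    using arg_cong[OF assms[unfolded hermitian_def], of "\<lambda>M. M$i$i"] by (simp add: cadj_def)
  then show ?thesis
    using Reals_cnj_iff by blast
qed

lemma pos_def_hermitian_diag_pos:
  assumes "pos_def_hermitian P"
  shows "0 < Re (P$i$i)"
proof -
  have "0 < Re (\<Sum>j\<in>UNIV. cnj (axis i 1 $ j) * (P *v axis i 1) $ j)"
    using assms by (simp add: pos_def_hermitian_def axis_eq_0_iff)
  moreover have "(\<Sum>j\<in>UNIV. cnj (axis i 1 $ j) * (P *v axis i 1) $ j) = P$i$i"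
    by (simp add: axis_def matrix_vector_mult_def if_distrib if_distribR sum.delta' cong: if_cong)
  ultimately show ?thesis
    by simp
qed

lemma pos_def_hermitian_trace:
  assumes "pos_def_hermitian P"
  shows "trace P \<in> \<real>" and "0 < Re (trace P)"
proof -
  have "hermitian P"
    using assms by (simp add: pos_def_hermitian_def)
  then show "trace P \<in> \<real>"
    unfolding trace_def by (simp add: hermitian_diag_real sum_in_Reals)
  show "0 < Re (trace P)"
    unfolding trace_def Re_sum
    by (rule sum_pos) (simp_all add: pos_def_hermitian_diag_pos[OF assms])
qed

lemma matrix2_eq_iff:
  "(M::complex^2^2) = N \<longleftrightarrow> M$1$1 = N$1$1 \<and> M$1$2 = N$1$2 \<and> M$2$1 = N$2$1 \<and> M$2$2 = N$2$2"
  by (auto simp: vec_eq_iff forall_2)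

lemma pos_def_hermitian_det:
  fixes P :: "complex^2^2"
  assumes "pos_def_hermitian P"
  shows "det P \<in> \<real>" and "0 < Re (det P)"
proof -
  have herm: "hermitian P"
    using assms by (simp add: pos_def_hermitian_def)
  have P21: "P$2$1 = cnj (P$1$2)"
    using arg_cong[OF herm[unfolded hermitian_def], of "\<lambda>M. M$2$1"] by (simp add: cadj_def)
  have P11: "P$1$1 \<in> \<real>" and P22: "P$2$2 \<in> \<real>"
    using herm by (simp_all add: hermitian_diag_real)
  have "det P = P$1$1 * P$2$2 - P$1$2 * cnj (P$1$2)"
    by (simp add: det_2 P21)
  with P11 P22 show real_det: "det P \<in> \<real>"
    by (simp add: complex_mult_cnj)
  obtain s d where s: "P$2$2 = of_real s" and d: "det P = of_real d"
    using P22 real_det by (metis Reals_cases)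
  \<comment> \<open>The test vector is chosen so that \<open>P *v x = (det P, 0)\<close>.\<close>
  define x :: "complex^2" where "x = (\<chi> i. if i = 1 then P$2$2 else - P$2$1)"
  have "x \<noteq> 0"
    using pos_def_hermitian_diag_pos[OF assms, of 2] by (auto simp: x_def vec_eq_iff)
  then have "0 < Re (\<Sum>i\<in>UNIV. cnj (x$i) * (P *v x)$i)"
    using assms by (simp add: pos_def_hermitian_def)
  also have "(\<Sum>i\<in>UNIV. cnj (x$i) * (P *v x)$i) = cnj (P$2$2) * det P"
    by (simp add: x_def sum_2 matrix_vector_mult_def det_2 algebra_simps)
  also have "\<dots> = of_real (s * d)"
    by (simp add: s d)
  finally have "0 < s * d"
    by simp
  moreover have "0 < s"
    using pos_def_hermitian_diag_pos[OF assms, of 2] by (simp add: s)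
  ultimately show "0 < Re (det P)"
    by (simp add: d zero_less_mult_iff)
qed

lemma cmat_matrix_mult: "cmat (A ** B) = cmat B ** cmat A"
  by (simp add: matrix2_eq_iff cmat_def mat2_def matrix_matrix_mult_def sum_2 algebra_simps)

lemma cadj_cmat: "cadj (cmat A) = cmat (cadj A)"
  by (simp add: matrix2_eq_iff cmat_def mat2_def cadj_def)

lemma matrix_mult_cmat: "A ** cmat A = cscale (det A) (mat 1)"
  by (simp add: matrix2_eq_iff cmat_def mat2_def matrix_matrix_mult_def sum_2 det_2 cscale_def mat_def)

lemma add_cmat: "A + cmat A = cscale (trace A) (mat 1)"
  by (simp add: matrix2_eq_iff cmat_def mat2_def trace_def sum_2 cscale_def mat_def)

lemma special_unitary_cmat:
  assumes "unitary U" and "det U = 1"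
  shows "cmat U = cadj U"
proof -
  have "cadj U = cadj U ** (U ** cmat U)"
    by (simp add: matrix_mult_cmat assms(2))
  also have "\<dots> = cmat U"
    using assms(1) by (simp add: matrix_mul_assoc unitary_def)
  finally show ?thesis
    by simp
qed

lemma polar_factors_det:
  fixes P U :: "complex^2^2"
  assumes "pos_def_hermitian P" and "unitary U" and "det (P ** U) = 1"
  shows "det P = 1" and "det U = 1"
proof -
  have PU: "det P * det U = 1"
    using assms(3) by (simp add: det_mul)
  obtain d where d: "det P = of_real d"
    using pos_def_hermitian_det(1)[OF assms(1)] by (metis Reals_cases)
  have "\<bar>d\<bar> = 1"
    using arg_cong[OF PU, of cmod] unitary_cmod_det[OF assms(2)] by (simp add: d norm_mult)
  moreover have "0 < d"
    using pos_def_hermitian_det(2)[OF assms(1)] by (simp add: d)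
  ultimately show "det P = 1"
    by (simp add: d)
  with PU show "det U = 1"
    by simp
qed

lemma hermitian_special_unitary_mult_add_cadj_cmat:
  assumes "hermitian P" and "unitary U" and "det U = 1"
  shows "P ** U + cadj (cmat (P ** U)) = cscale (trace P) U"
proof -
  have "cadj (cmat (P ** U)) = cadj (cmat P) ** cadj (cmat U)"
    by (simp add: cmat_matrix_mult cadj_matrix_mult)
  also have "\<dots> = cmat P ** U"
    using assms by (simp add: cadj_cmat special_unitary_cmat hermitian_def)
  finally have "P ** U + cadj (cmat (P ** U)) = (P + cmat P) ** U"
    by (simp add: matrix_add_rdistrib)
  also have "\<dots> = cscale (trace P) U"
    by (simp add: add_cmat cscale_mat1_mult)
  finally show ?thesis .
qed

theorem lemma2p1:
  fixes A P U :: "complex^2^2"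
  assumes "det A = 1"
    and "pos_def_hermitian P"
    and "unitary U"
    and "A = P ** U"
  shows "(\<exists>r::real. r \<noteq> 0 \<and> A + cadj (cmat A) = cscale (complex_of_real r) U)
         \<and> (\<exists>V\<in>SU2. \<exists>c::complex. c \<noteq> 0 \<and> A + cadj (cmat A) = cscale c V)"
proof -
  have "det U = 1"
    using polar_factors_det(2)[OF assms(2,3)] assms(1,4) by simp
  then have "U \<in> SU2"
    using assms(3) by (simp add: SU2_def)
  have "hermitian P"
    using assms(2) by (simp add: pos_def_hermitian_def)
  obtain r where r: "trace P = of_real r"
    using pos_def_hermitian_trace(1)[OF assms(2)] by (metis Reals_cases)
  have "r \<noteq> 0"
    using pos_def_hermitian_trace(2)[OF assms(2)] by (simp add: r)
  have "A + cadj (cmat A) = cscale (of_real r) U"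
    using hermitian_special_unitary_mult_add_cadj_cmat[OF \<open>hermitian P\<close> assms(3) \<open>det U = 1\<close>]
    by (simp add: assms(4) r)
  with \<open>r \<noteq> 0\<close> \<open>U \<in> SU2\<close> show ?thesis
    using of_real_eq_0_iff by blast
qed

end
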